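(* First-order logic is closed under inverse morphisms of $\mathbb{T}$-algebras: for all alphabets $\Sigma,\Gamma$, every morphism $\varphi:\mathbb{T}\Sigma\to\mathbb{T}\Gamma$ of $\mathbb{T}$-algebras, and every $\mathrm{FO}$-definable language $K\subseteq\mathbb{T}_n\Gamma$, the language $\varphi^{-1}[K]$ is $\mathrm{FO}$-definable.
   Context: Sorts are $\omega$ (arities). For an alphabet (finite unordered $\omega$-sorted set) $\Sigma$ and $n<\omega$, $\mathbb{T}_n\Sigma$ is the set of finite or infinite trees with ordered successors labelled by elements of $\Sigma$ or variables $x_0,\dots,x_{n-1}$ (arity $0$), where a vertex with label in $\Sigma_k$ has exactly $k$ successors, variables label leaves only, each variable occurs at most once, and the root is labelled by an element of $\Sigma$. $\mathbb{T}$ is a monad with $\mathrm{sing}(a)=a(x_0,\dots,x_{k-1})$ for $a$ of arity $k$, and $\mathrm{flat}$ which, for a tree of trees, replaces each vertex $v$ by its label tree $T(v)$, connecting its $x_i$-leaf to the root of the tree replacing the $(i+1)$-st successor of $v$. A $\mathbb{T}$-algebra morphism $\varphi:\mathbb{T}\Sigma\to\mathbb{T}\Gamma$ is a sort-preserving map commuting with $\mathrm{flat}$ (equivalently determined by $\varphi\circ\mathrm{sing}:\Sigma\to\mathbb{T}\Gamma$). A tree $t\in\mathbb{T}_n\Sigma$ is identified with the structure $\langle\mathrm{dom}(t),\preceq,(S_i)_{i<\omega},(P_c)_{c\in\Sigma},(Q_i)_{i<n},R\rangle$ ($\preceq$ tree order with root least, $S_i$ $i$-th successor relation, $P_c$ vertices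 labelled $c$, $Q_i$ vertices labelled $x_i$, $R$ the root). $K\subseteq\mathbb{T}_n\Sigma$ is FO-definable if it is the set of trees in $\mathbb{T}_n\Sigma$ satisfying some first-order sentence over this signature. *)

theory Defs
  imports Main
begin

text \<open>A tree is represented by its (canonical) labelling of positions: positions are
lists of natural numbers (the i-th successor of p is p @ [i], successors indexed from 0),
and a position is labelled either by a letter (Inl c) or by a variable x_i (Inr i);
positions outside the domain are mapped to None.\<close>

type_synonym 'a rtree = "nat list \<Rightarrow> ('a + nat) option"

definition wf_tree :: "'a set \<Rightarrow> ('a \<Rightarrow> nat) \<Rightarrow> nat \<Rightarrow> 'a rtree \<Rightarrow> bool" where
  "wf_tree A ar n t \<longleftrightarrow>
     (\<exists>c\<in>A. t [] = Some (Inl c)) \<and>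
     (\<forall>p. case t p of
             None \<Rightarrow> (\<forall>i. t (p @ [i]) = None)
           | Some (Inl c) \<Rightarrow> c \<in> A \<and> (\<forall>i. t (p @ [i]) \<noteq> None \<longleftrightarrow> i < ar c)
           | Some (Inr j) \<Rightarrow> j < n \<and> (\<forall>i. t (p @ [i]) = None)) \<and>
     (\<forall>p q j. t p = Some (Inr j) \<longrightarrow> t q = Some (Inr j) \<longrightarrow> p = q)"

definition trees :: "'a set \<Rightarrow> ('a \<Rightarrow> nat) \<Rightarrow> nat \<Rightarrow> 'a rtree set" where
  "trees A ar n = {t. wf_tree A ar n t}"

text \<open>The omega-sorted set T A, used as an alphabet: letters are pairs (k, u) with u in T_k A,
of arity k.\<close>

definition talph :: "'a set \<Rightarrow> ('a \<Rightarrow> nat) \<Rightarrow> (nat \<times> 'a rtree) set" where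
  "talph A ar = {(k, u). wf_tree A ar k u}"

text \<open>For a tree of trees s, resolve s v q locates the vertex of flat s corresponding to
position q of the label tree T(v) at outer vertex v.  If q carries a letter, the result is
that vertex (with its letter); if q carries variable x_i, it is identified with the root of
the tree replacing the (i+1)-st successor v @ [i] of v, or with the variable x_j if that
successor is an x_j-leaf of the outer tree.\<close>

definition resolve :: "(nat \<times> 'a rtree) rtree \<Rightarrow> nat list \<Rightarrow> nat list
                         \<Rightarrow> ((nat list \<times> nat list) + nat) option" where
  "resolve s v q =
     (case s v of
        Some (Inl (k, u)) \<Rightarrow>
          (case u q of
             Some (Inl c) \<Rightarrow> Some (Inl (v, q))
           | Some (Inr i) \<Rightarrow>
               (case s (v @ [i]) of
                  Some (Inl _) \<Rightarrow> Some (Inl (v @ [i], []))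
                | Some (Inr j) \<Rightarrow> Some (Inr j)
                | None \<Rightarrow> None)
           | None \<Rightarrow> None)
      | _ \<Rightarrow> None)"

definition flat_step :: "(nat \<times> 'a rtree) rtree \<Rightarrow> ((nat list \<times> nat list) + nat) option
                          \<Rightarrow> nat \<Rightarrow> ((nat list \<times> nat list) + nat) option" where
  "flat_step s st i = (case st of Some (Inl (v, q)) \<Rightarrow> resolve s v (q @ [i]) | _ \<Rightarrow> None)"

definition flat_pos :: "(nat \<times> 'a rtree) rtree \<Rightarrow> nat list \<Rightarrow> ((nat list \<times> nat list) + nat) option" where
  "flat_pos s p = foldl (flat_step s) (resolve s [] []) p"

definition flat :: "(nat \<times> 'a rtree) rtree \<Rightarrow> 'a rtree" where
  "flat s p =
     (case flat_pos s p of
        Some (Inl (v, q)) \<Rightarrow> (case s v of Some (Inl (k, u)) \<Rightarrow> u q | _ \<Rightarrow> None)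
      | Some (Inr j) \<Rightarrow> Some (Inr j)
      | None \<Rightarrow> None)"

text \<open>The functor T applied to a sorted map phi (phi k acts on sort k): relabelling.\<close>

definition tmap :: "(nat \<Rightarrow> 'a rtree \<Rightarrow> 'b rtree) \<Rightarrow> (nat \<times> 'a rtree) rtree \<Rightarrow> (nat \<times> 'b rtree) rtree" where
  "tmap phi s = (\<lambda>p. map_option (map_sum (\<lambda>(k, u). (k, phi k u)) id) (s p))"

definition talg_morphism :: "'a set \<Rightarrow> ('a \<Rightarrow> nat) \<Rightarrow> 'b set \<Rightarrow> ('b \<Rightarrow> nat)
                              \<Rightarrow> (nat \<Rightarrow> 'a rtree \<Rightarrow> 'b rtree) \<Rightarrow> bool" where
  "talg_morphism A arA B arB phi \<longleftrightarrow>
     (\<forall>n t. wf_tree A arA n t \<longrightarrow> wf_tree B arB n (phi n t)) \<and>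
     (\<forall>n s. wf_tree (talph A arA) fst n s \<longrightarrow> phi n (flat s) = flat (tmap phi s))"

datatype 'a fo =
    FLe nat nat
  | FSucc nat nat nat
  | FLab 'a nat
  | FVar nat nat
  | FRoot nat
  | FEq nat nat
  | FNeg "'a fo"
  | FConj "'a fo" "'a fo"
  | FEx nat "'a fo"

fun fv :: "'a fo \<Rightarrow> nat set" where
  "fv (FLe x y) = {x, y}"
| "fv (FSucc i x y) = {x, y}"
| "fv (FLab c x) = {x}"
| "fv (FVar i x) = {x}"
| "fv (FRoot x) = {x}"
| "fv (FEq x y) = {x, y}"
| "fv (FNeg f) = fv f"
| "fv (FConj f g) = fv f \<union> fv g"
| "fv (FEx x f) = fv f - {x}"

fun fo_sig :: "'a set \<Rightarrow> nat \<Rightarrow> 'a fo \<Rightarrow> bool" where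
  "fo_sig A n (FLab c x) = (c \<in> A)"
| "fo_sig A n (FVar i x) = (i < n)"
| "fo_sig A n (FNeg f) = fo_sig A n f"
| "fo_sig A n (FConj f g) = (fo_sig A n f \<and> fo_sig A n g)"
| "fo_sig A n (FEx x f) = fo_sig A n f"
| "fo_sig A n _ = True"

fun holds :: "'a rtree \<Rightarrow> 'a fo \<Rightarrow> (nat \<Rightarrow> nat list) \<Rightarrow> bool" where
  "holds t (FLe x y) e = (\<exists>r. e y = e x @ r)"
| "holds t (FSucc i x y) e = (e y = e x @ [i])"
| "holds t (FLab c x) e = (t (e x) = Some (Inl c))"
| "holds t (FVar i x) e = (t (e x) = Some (Inr i))"
| "holds t (FRoot x) e = (e x = [])"
| "holds t (FEq x y) e = (e x = e y)"
| "holds t (FNeg f) e = (\<not> holds t f e)"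
| "holds t (FConj f g) e = (holds t f e \<and> holds t g e)"
| "holds t (FEx x f) e = (\<exists>p. t p \<noteq> None \<and> holds t f (e(x := p)))"

definition models :: "'a rtree \<Rightarrow> 'a fo \<Rightarrow> bool" where
  "models t f = holds t f (\<lambda>_. [])"

definition fo_definable :: "'a set \<Rightarrow> ('a \<Rightarrow> nat) \<Rightarrow> nat \<Rightarrow> 'a rtree set \<Rightarrow> bool" where
  "fo_definable A ar n K \<longleftrightarrow>
     (\<exists>f. fv f = {} \<and> fo_sig A n f \<and> K = {t \<in> trees A ar n. models t f})"

end

theory Submission
  imports Defs "HOL-Library.Sublist" "HOL-Library.Nat_Bijection"
begin

text \<open>A morphism phi is determined by the trees h a = phi (sing a), and phi t = flat (blocks t), where
  blocks t puts h a at every a-labelled vertex of t. Hence a vertex of phi t is a vertex v of t that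
  survives the substitution (a first-order definable property of v) together with a position q in
  the tree h a placed at v. A formula over phi t is translated by letting its variables range over
  the vertices v only. The positions q are eliminated by induction on the formula: its truth depends
  on them only through a colouring of each block with finitely many colours, so a quantifier over q
  becomes a finite disjunction over the colours it can realise, and atomic relations between (v, q)
  and (v', q') become relations between v and v' in t, with finitely many cases depending on q, q'.\<close>

section \<open>Well-formed trees\<close>

lemma option_sum_exhaust:
  obtains "x = None" | a where "x = Some (Inl a)" | b where "x = Some (Inr b)"
  by (metis option.exhaust sum.exhaust)

lemma wf_tree_root: "wf_tree A ar k t \<Longrightarrow> \<exists>c\<in>A. t [] = Some (Inl c)"
  unfolding wf_tree_def by blast

lemma wf_tree_node:
  "wf_tree A ar k t \<Longrightarrow> case t p of None \<Rightarrow> \<forall>i. t (p @ [i]) = None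
     | Some (Inl c) \<Rightarrow> c \<in> A \<and> (\<forall>i. t (p @ [i]) \<noteq> None \<longleftrightarrow> i < ar c)
     | Some (Inr j) \<Rightarrow> j < k \<and> (\<forall>i. t (p @ [i]) = None)"
  unfolding wf_tree_def by blast

lemma wf_tree_None: "wf_tree A ar k t \<Longrightarrow> t p = None \<Longrightarrow> t (p @ [i]) = None"
  using wf_tree_node[of A ar k t p] by simp

lemma wf_tree_Inl:
  "wf_tree A ar k t \<Longrightarrow> t p = Some (Inl c) \<Longrightarrow> c \<in> A \<and> (t (p @ [i]) \<noteq> None \<longleftrightarrow> i < ar c)"
  using wf_tree_node[of A ar k t p] by simp

lemma wf_tree_Inr: "wf_tree A ar k t \<Longrightarrow> t p = Some (Inr j) \<Longrightarrow> j < k \<and> t (p @ [i]) = None"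
  using wf_tree_node[of A ar k t p] by simp

lemma wf_tree_var_unique:
  "wf_tree A ar k t \<Longrightarrow> t p = Some (Inr j) \<Longrightarrow> t q = Some (Inr j) \<Longrightarrow> p = q"
  unfolding wf_tree_def by blast

lemma wf_tree_kind: "wf_tree A ar k t \<Longrightarrow> t p = Some K \<Longrightarrow> K \<in> Inl ` A \<union> Inr ` {..<k}"
  by (cases K) (auto dest: wf_tree_Inl wf_tree_Inr)

lemma wf_tree_child:
  assumes wt: "wf_tree A ar k t" and ch: "t (p @ [i]) \<noteq> None"
  shows "\<exists>c. t p = Some (Inl c) \<and> i < ar c"
proof (cases "t p")
  case None
  then show ?thesis using wf_tree_None[OF wt] ch by simp
next
  case (Some K)
  then show ?thesis using wf_tree_Inl[OF wt, of p] wf_tree_Inr[OF wt, of p] ch by (cases K) auto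
qed

lemma wf_tree_prefix:
  assumes wt: "wf_tree A ar k t" and "t q \<noteq> None" "prefix p q"
  shows "t p \<noteq> None"
proof -
  obtain r where "q = p @ r" using \<open>prefix p q\<close> prefixE by blast
  with \<open>t q \<noteq> None\<close> show ?thesis
  proof (induction r arbitrary: q rule: rev_induct)
    case (snoc i r)
    then show ?case using wf_tree_child[OF wt, of "p @ r" i] by auto
  qed simp
qed

lemma wf_tree_ancestor:
  assumes wt: "wf_tree A ar k t" and "t v \<noteq> None" "i < length v"
  shows "\<exists>a. t (take i v) = Some (Inl a) \<and> v ! i < ar a"
proof -
  have "prefix (take i v @ [v ! i]) v"
    using \<open>i < length v\<close> by (metis take_Suc_conv_app_nth take_is_prefix)
  then show ?thesis using wf_tree_child[OF wt] wf_tree_prefix[OF wt \<open>t v \<noteq> None\<close>] by blast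
qed

definition has_var :: "'b rtree \<Rightarrow> nat \<Rightarrow> bool" where
  "has_var u c \<longleftrightarrow> (\<exists>q. u q = Some (Inr c))"

definition var_pos :: "'b rtree \<Rightarrow> nat \<Rightarrow> nat list" where
  "var_pos u c = (THE q. u q = Some (Inr c))"

lemma var_pos: "wf_tree A ar k u \<Longrightarrow> has_var u c \<Longrightarrow> u (var_pos u c) = Some (Inr c)"
  unfolding var_pos_def has_var_def by (rule theI') (auto dest: wf_tree_var_unique)

lemma var_pos_eq: "wf_tree A ar k u \<Longrightarrow> u q = Some (Inr c) \<Longrightarrow> var_pos u c = q"
  unfolding var_pos_def by (rule the_equality) (auto dest: wf_tree_var_unique)

lemma has_var_less: "wf_tree A ar k u \<Longrightarrow> has_var u c \<Longrightarrow> c < k"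
  unfolding has_var_def using wf_tree_Inr by blast

lemma var_pos_snoc:
  assumes wu: "wf_tree A ar k u" and "has_var u c"
  obtains q i a where "var_pos u c = q @ [i]" "u q = Some (Inl a)"
proof -
  have pos: "u (var_pos u c) = Some (Inr c)" using var_pos[OF assms] .
  then have "var_pos u c \<noteq> []" using wf_tree_root[OF wu] by auto
  then obtain q i where qi: "var_pos u c = q @ [i]" by (metis rev_exhaust)
  then show ?thesis using that wf_tree_child[OF wu, of q i] pos by auto
qed

section \<open>Substituting a tree for every letter\<close>

locale block_subst =
  fixes Sig :: "'a set" and ar :: "'a \<Rightarrow> nat" and Gam :: "'b set" and arG :: "'b \<Rightarrow> nat"
    and h :: "'a \<Rightarrow> 'b rtree"
  assumes wf_h: "a \<in> Sig \<Longrightarrow> wf_tree Gam arG (ar a) (h a)"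
begin

definition blocks :: "'a rtree \<Rightarrow> (nat \<times> 'b rtree) rtree" where
  "blocks t p = (case t p of Some (Inl a) \<Rightarrow> Some (Inl (ar a, h a)) | Some (Inr j) \<Rightarrow> Some (Inr j)
     | None \<Rightarrow> None)"

lemma blocks_simps:
  "t p = None \<Longrightarrow> blocks t p = None"
  "t p = Some (Inl a) \<Longrightarrow> blocks t p = Some (Inl (ar a, h a))"
  "t p = Some (Inr j) \<Longrightarrow> blocks t p = Some (Inr j)"
  by (simp_all add: blocks_def)

lemma blocks_eq_None: "blocks t p = None \<longleftrightarrow> t p = None"
  by (simp add: blocks_def split: option.splits sum.splits)

lemma blocks_eq_Inr: "blocks t p = Some (Inr j) \<longleftrightarrow> t p = Some (Inr j)"
  by (simp add: blocks_def split: option.splits sum.splits)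

lemma wf_blocks:
  assumes wt: "wf_tree Sig ar n t"
  shows "wf_tree (talph Gam arG) fst n (blocks t)"
  unfolding wf_tree_def
proof (intro conjI allI impI)
  show "\<exists>c\<in>talph Gam arG. blocks t [] = Some (Inl c)"
    using wf_tree_root[OF wt] wf_h by (auto simp: blocks_def talph_def)
next
  fix p
  show "case blocks t p of None \<Rightarrow> \<forall>i. blocks t (p @ [i]) = None
    | Some (Inl c) \<Rightarrow> c \<in> talph Gam arG \<and> (\<forall>i. blocks t (p @ [i]) \<noteq> None \<longleftrightarrow> i < fst c)
    | Some (Inr j) \<Rightarrow> j < n \<and> (\<forall>i. blocks t (p @ [i]) = None)"
    using wf_tree_node[OF wt, of p] wf_h
    by (cases "t p" rule: option_sum_exhaust) (auto simp: blocks_simps blocks_eq_None talph_def)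
next
  fix p q j
  assume "blocks t p = Some (Inr j)" "blocks t q = Some (Inr j)"
  then have "t p = Some (Inr j)" "t q = Some (Inr j)" by (simp_all add: blocks_eq_Inr)
  then show "p = q" using wf_tree_var_unique[OF wt] by blast
qed

text \<open>The value of flat_pos (blocks t) at the vertex given by v and q, cf. flat_pos_enc.\<close>

definition located :: "'a rtree \<Rightarrow> nat list \<Rightarrow> nat list \<Rightarrow> ((nat list \<times> nat list) + nat) option" where
  "located t v q = (case t v of Some (Inl _) \<Rightarrow> Some (Inl (v, q)) | Some (Inr j) \<Rightarrow> Some (Inr j)
     | None \<Rightarrow> None)"

lemma located_eq_None [simp]: "located t v q = None \<longleftrightarrow> t v = None"
  by (simp add: located_def split: option.splits sum.splits)

lemma resolve_blocks:
  "t v = Some (Inl a) \<Longrightarrow> resolve (blocks t) v q =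
     (case h a q of Some (Inl _) \<Rightarrow> Some (Inl (v, q)) | Some (Inr c) \<Rightarrow> located t (v @ [c]) []
      | None \<Rightarrow> None)"
  by (auto simp: resolve_def blocks_def located_def split: option.splits sum.splits)

lemma flat_pos_snoc_Inl:
  "flat_pos (blocks t) p = Some (Inl (v, q)) \<Longrightarrow> t v = Some (Inl a) \<Longrightarrow>
   flat_pos (blocks t) (p @ [i]) =
     (case h a (q @ [i]) of Some (Inl _) \<Rightarrow> Some (Inl (v, q @ [i]))
      | Some (Inr c) \<Rightarrow> located t (v @ [c]) [] | None \<Rightarrow> None)"
  by (simp add: flat_pos_def flat_step_def resolve_blocks)

lemma flat_pos_snoc_Inr: "flat_pos s p = Some (Inr j) \<Longrightarrow> flat_pos s (p @ [i]) = None"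
  by (simp add: flat_pos_def flat_step_def)

lemma flat_pos_snoc_None: "flat_pos s p = None \<Longrightarrow> flat_pos s (p @ [i]) = None"
  by (simp add: flat_pos_def flat_step_def)

text \<open>A vertex of t survives in flat (blocks t) iff every edge on its path leaves a vertex
  labelled a through a variable that actually occurs in h a.\<close>

definition reached :: "'a rtree \<Rightarrow> nat list \<Rightarrow> bool" where
  "reached t v \<longleftrightarrow> t v \<noteq> None \<and>
     (\<forall>i<length v. \<exists>a. t (take i v) = Some (Inl a) \<and> has_var (h a) (v ! i))"

lemma reached_Nil: "reached t [] \<longleftrightarrow> t [] \<noteq> None"
  by (simp add: reached_def)

lemma reached_snoc:
  "reached t (v @ [c]) \<longleftrightarrow>
     reached t v \<and> (\<exists>a. t v = Some (Inl a) \<and> has_var (h a) c) \<and> t (v @ [c]) \<noteq> None"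
  unfolding reached_def by (auto simp: nth_append less_Suc_eq)

text \<open>The position in flat (blocks t) of the root of the block of v: the concatenated positions
  of the variables through which the path to v leaves the blocks of its ancestors.\<close>

primrec block_pos_from :: "'a rtree \<Rightarrow> nat list \<Rightarrow> nat list \<Rightarrow> nat list" where
  "block_pos_from t u [] = []"
| "block_pos_from t u (c # w) =
     (case t u of Some (Inl a) \<Rightarrow> var_pos (h a) c | _ \<Rightarrow> []) @ block_pos_from t (u @ [c]) w"

definition block_pos :: "'a rtree \<Rightarrow> nat list \<Rightarrow> nat list" where
  "block_pos t v = block_pos_from t [] v"

lemma block_pos_Nil [simp]: "block_pos t [] = []"
  by (simp add: block_pos_def)

lemma block_pos_snoc:
  "block_pos t (v @ [c]) = block_pos t v @ (case t v of Some (Inl a) \<Rightarrow> var_pos (h a) c | _ \<Rightarrow> [])"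
proof -
  have "block_pos_from t u (v @ [c]) =
    block_pos_from t u v @ (case t (u @ v) of Some (Inl a) \<Rightarrow> var_pos (h a) c | _ \<Rightarrow> [])" for u
    by (induction v arbitrary: u) simp_all
  then show ?thesis by (simp add: block_pos_def)
qed

lemma block_pos_snoc_Inl: "t v = Some (Inl a) \<Longrightarrow> block_pos t (v @ [c]) = block_pos t v @ var_pos (h a) c"
  by (simp add: block_pos_snoc)

lemma prefix_block_pos: "prefix v w \<Longrightarrow> prefix (block_pos t v) (block_pos t w)"
proof -
  assume "prefix v w"
  then obtain r where "w = v @ r" by (auto simp: prefix_def)
  moreover have "prefix (block_pos t v) (block_pos t (v @ r))"
    by (induction r rule: rev_induct)
      (auto simp: block_pos_snoc simp flip: append_assoc intro: prefix_order.trans)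
  ultimately show ?thesis by simp
qed

definition inner :: "'a + nat \<Rightarrow> nat list set" where
  "inner K = (case K of Inl a \<Rightarrow> {q. \<exists>c. h a q = Some (Inl c)} | Inr j \<Rightarrow> {[]})"

text \<open>A vertex of flat (blocks t) is given by a reached vertex v of t together with a letter
  position q of the block h a if v is labelled a, or q = [] if v is a variable leaf.\<close>

definition valid :: "'a rtree \<Rightarrow> nat list \<Rightarrow> nat list \<Rightarrow> bool" where
  "valid t v q \<longleftrightarrow> reached t v \<and> (\<exists>K. t v = Some K \<and> q \<in> inner K)"

definition enc :: "'a rtree \<Rightarrow> nat list \<Rightarrow> nat list \<Rightarrow> nat list" where
  "enc t v q = block_pos t v @ q"

definition kind_label :: "'a + nat \<Rightarrow> nat list \<Rightarrow> ('b + nat) option" where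
  "kind_label K q = (case K of Inl a \<Rightarrow> h a q | Inr j \<Rightarrow> Some (Inr j))"

definition holes_below :: "'a + nat \<Rightarrow> nat list \<Rightarrow> nat set" where
  "holes_below K q = {c. \<exists>a. K = Inl a \<and> has_var (h a) c \<and> prefix q (var_pos (h a) c)}"

text \<open>The block of every vertex w with descends t v q w hangs below position q of the block of v.\<close>

definition descends :: "'a rtree \<Rightarrow> nat list \<Rightarrow> nat list \<Rightarrow> nat list \<Rightarrow> bool" where
  "descends t v q w \<longleftrightarrow> (\<exists>K c. t v = Some K \<and> c \<in> holes_below K q \<and> prefix (v @ [c]) w)"

lemma validE:
  assumes "valid t v q"
  obtains a where "reached t v" "t v = Some (Inl a)" "q \<in> inner (Inl a)"
    | j where "reached t v" "t v = Some (Inr j)" "q = []"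
proof -
  obtain K where "reached t v" "t v = Some K" "q \<in> inner K" using assms by (auto simp: valid_def)
  then show ?thesis using that by (cases K) (auto simp: inner_def)
qed

lemma located_valid: "valid t v q \<Longrightarrow> located t v q \<noteq> None"
  by (auto simp: valid_def located_def split: sum.splits)

lemma Nil_in_inner: "a \<in> Sig \<Longrightarrow> [] \<in> inner (Inl a)"
  using wf_tree_root[OF wf_h] by (auto simp: inner_def)

lemma descends_prefix_enc: "descends t v q v' \<Longrightarrow> prefix (enc t v q) (enc t v' q')"
proof -
  assume "descends t v q v'"
  then obtain a c where tv: "t v = Some (Inl a)" and "prefix q (var_pos (h a) c)"
    and "prefix (v @ [c]) v'" unfolding descends_def holes_below_def by blast
  then have "prefix (block_pos t v @ q) (block_pos t (v @ [c]))"
    by (simp add: block_pos_snoc_Inl[of t v a, OF tv])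
  also have "prefix \<dots> (block_pos t v')" by (rule prefix_block_pos) fact
  finally show ?thesis unfolding enc_def by (metis prefix_prefix)
qed

context
  fixes t :: "'a rtree" and n :: nat
  assumes wt: "wf_tree Sig ar n t"
begin

lemma label_in_Sig: "t v = Some (Inl a) \<Longrightarrow> a \<in> Sig"
  using wf_tree_Inl[OF wt] by blast

lemma wf_h_label: "t v = Some (Inl a) \<Longrightarrow> wf_tree Gam arG (ar a) (h a)"
  by (rule wf_h[OF label_in_Sig])

lemma reached_iff:
  "reached t v \<longleftrightarrow> t v \<noteq> None \<and>
     (\<forall>y a c. t y = Some (Inl a) \<longrightarrow> prefix (y @ [c]) v \<longrightarrow> has_var (h a) c)"
proof
  assume r: "reached t v"
  show "t v \<noteq> None \<and> (\<forall>y a c. t y = Some (Inl a) \<longrightarrow> prefix (y @ [c]) v \<longrightarrow> has_var (h a) c)"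
  proof (intro conjI allI impI)
    show "t v \<noteq> None" using r by (simp add: reached_def)
    fix y a c assume "t y = Some (Inl a)" "prefix (y @ [c]) v"
    moreover from \<open>prefix (y @ [c]) v\<close> have "length y < length v" "take (length y) v = y" "v ! length y = c"
      by (auto simp: prefix_def nth_append)
    ultimately show "has_var (h a) c" using r unfolding reached_def by force
  qed
next
  assume r: "t v \<noteq> None \<and> (\<forall>y a c. t y = Some (Inl a) \<longrightarrow> prefix (y @ [c]) v \<longrightarrow> has_var (h a) c)"
  have "\<exists>a. t (take i v) = Some (Inl a) \<and> has_var (h a) (v ! i)" if i: "i < length v" for i
  proof -
    obtain a where "t (take i v) = Some (Inl a)" using wf_tree_ancestor[OF wt] r i by blast
    moreover have "prefix (take i v @ [v ! i]) v"
      using i by (metis take_Suc_conv_app_nth take_is_prefix)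
    ultimately show ?thesis using r by blast
  qed
  then show "reached t v" using r by (simp add: reached_def)
qed

lemma valid_root_pos: "reached t v \<Longrightarrow> valid t v []"
  using wf_tree_kind[OF wt, of v] Nil_in_inner unfolding valid_def reached_def
  by (auto simp: inner_def)

lemma valid_hole_child:
  "reached t v \<Longrightarrow> t v = Some (Inl a) \<Longrightarrow> h a q = Some (Inr c) \<Longrightarrow> t (v @ [c]) \<noteq> None \<Longrightarrow>
   valid t (v @ [c]) []"
  by (rule valid_root_pos) (auto simp: reached_snoc has_var_def)

lemma flat_pos_inner:
  assumes tv: "t v = Some (Inl a)" and P: "flat_pos (blocks t) P = Some (Inl (v, []))"
  shows "q \<in> inner (Inl a) \<Longrightarrow> flat_pos (blocks t) (P @ q) = Some (Inl (v, q))"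
proof (induction q rule: rev_induct)
  case (snoc i q)
  obtain c where c: "h a (q @ [i]) = Some (Inl c)" using snoc.prems by (auto simp: inner_def)
  have "h a q \<noteq> None" using wf_tree_prefix[OF wf_h_label[OF tv], of "q @ [i]" q] c by auto
  then have "q \<in> inner (Inl a)"
    using wf_tree_child[OF wf_h_label[OF tv]] c by (auto simp: inner_def)
  then show ?case
    using flat_pos_snoc_Inl[OF snoc.IH tv, of i] c by simp
qed (use P in simp)

lemma flat_pos_block_pos: "reached t v \<Longrightarrow> flat_pos (blocks t) (block_pos t v) = located t v []"
proof (induction v rule: rev_induct)
  case Nil
  obtain a where a: "a \<in> Sig" "t [] = Some (Inl a)" using wf_tree_root[OF wt] by blast
  then show ?case
    using Nil_in_inner[OF a(1)] by (auto simp: flat_pos_def resolve_blocks inner_def located_def)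
next
  case (snoc c v)
  then obtain a where rv: "reached t v" and tv: "t v = Some (Inl a)" and hc: "has_var (h a) c"
    by (auto simp: reached_snoc)
  obtain q i b where qi: "var_pos (h a) c = q @ [i]" "h a q = Some (Inl b)"
    using var_pos_snoc[OF wf_h_label[OF tv] hc] by blast
  have "flat_pos (blocks t) (block_pos t v @ q) = Some (Inl (v, q))"
    using flat_pos_inner[OF tv, of "block_pos t v" q] snoc.IH[OF rv] qi(2)
    by (simp add: tv located_def inner_def)
  moreover have "h a (q @ [i]) = Some (Inr c)"
    using var_pos[OF wf_h_label[OF tv] hc] qi(1) by simp
  ultimately show ?case
    using flat_pos_snoc_Inl[of t "block_pos t v @ q" v q a i] tv
    by (simp add: block_pos_snoc_Inl[of t v a, OF tv] qi(1))
qed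

lemma flat_pos_enc: "valid t v q \<Longrightarrow> flat_pos (blocks t) (enc t v q) = located t v q"
proof (erule validE)
  fix a assume "reached t v" "t v = Some (Inl a)" "q \<in> inner (Inl a)"
  then show ?thesis
    using flat_pos_inner flat_pos_block_pos by (simp add: enc_def located_def)
qed (simp add: enc_def flat_pos_block_pos)

lemma flat_enc: "valid t v q \<Longrightarrow> t v = Some K \<Longrightarrow> flat (blocks t) (enc t v q) = kind_label K q"
  by (simp add: flat_def flat_pos_enc located_def blocks_def kind_label_def split: sum.splits)

lemma kind_label_valid: "valid t v q \<Longrightarrow> t v = Some K \<Longrightarrow> kind_label K q \<noteq> None"
  by (auto simp: valid_def kind_label_def inner_def split: sum.splits)

lemma located_inj:
  assumes "valid t v q" "valid t v' q'" "located t v q = located t v' q'"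
  shows "v = v' \<and> q = q'"
  using assms wf_tree_var_unique[OF wt, of v _ v']
  by (elim validE) (auto simp: located_def)

lemma enc_inj: "valid t v q \<Longrightarrow> valid t v' q' \<Longrightarrow> enc t v q = enc t v' q' \<Longrightarrow> v = v' \<and> q = q'"
  using located_inj flat_pos_enc by metis

lemma enc_snoc_var:
  "t v = Some (Inl a) \<Longrightarrow> h a (q @ [k]) = Some (Inr c) \<Longrightarrow> enc t (v @ [c]) [] = enc t v q @ [k]"
  using var_pos_eq[OF wf_h_label] by (simp add: enc_def block_pos_snoc_Inl)

lemma flat_pos_decode: "flat_pos (blocks t) p \<noteq> None \<Longrightarrow> \<exists>v q. valid t v q \<and> p = enc t v q"
proof (induction p rule: rev_induct)
  case Nil
  have "reached t []" using wf_tree_root[OF wt] by (auto simp: reached_Nil)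
  then show ?case using valid_root_pos by (force simp: enc_def)
next
  case (snoc i p)
  then obtain v q where vq: "valid t v q" and p: "p = enc t v q"
    using flat_pos_snoc_None by fastforce
  then have fp: "flat_pos (blocks t) p = located t v q" using flat_pos_enc by simp
  from vq show ?case
  proof (cases rule: validE)
    case (1 a)
    then have fpi: "flat_pos (blocks t) (p @ [i]) =
      (case h a (q @ [i]) of Some (Inl _) \<Rightarrow> Some (Inl (v, q @ [i]))
       | Some (Inr c) \<Rightarrow> located t (v @ [c]) [] | None \<Rightarrow> None)"
      using flat_pos_snoc_Inl fp by (simp add: located_def)
    show ?thesis
    proof (cases "h a (q @ [i])" rule: option_sum_exhaust)
      case (2 c)
      then have "valid t v (q @ [i]) \<and> p @ [i] = enc t v (q @ [i])"
        using 1 p by (simp add: valid_def inner_def enc_def)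
      then show ?thesis by blast
    next
      case (3 c)
      note hc = \<open>h a (q @ [i]) = Some (Inr c)\<close>
      then have "t (v @ [c]) \<noteq> None" using fpi snoc.prems by (auto simp: located_def split: option.splits)
      then have "valid t (v @ [c]) []" using valid_hole_child 1 hc by blast
      moreover have "p @ [i] = enc t (v @ [c]) []" using p enc_snoc_var 1 hc by simp
      ultimately show ?thesis by blast
    qed (use fpi snoc.prems in auto)
  next
    case 2
    then have "flat_pos (blocks t) (p @ [i]) = None" using fp flat_pos_snoc_Inr by (simp add: located_def)
    with snoc.prems show ?thesis by simp
  qed
qed

lemma flat_blocks_dom: "flat (blocks t) p \<noteq> None \<longleftrightarrow> (\<exists>v q. valid t v q \<and> p = enc t v q)"
proof
  assume "flat (blocks t) p \<noteq> None"
  then have "flat_pos (blocks t) p \<noteq> None" by (auto simp: flat_def split: option.splits)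
  then show "\<exists>v q. valid t v q \<and> p = enc t v q" by (rule flat_pos_decode)
next
  assume "\<exists>v q. valid t v q \<and> p = enc t v q"
  then obtain v q K where "valid t v q" "p = enc t v q" "t v = Some K" by (auto simp: valid_def)
  then show "flat (blocks t) p \<noteq> None" using flat_enc kind_label_valid by simp
qed

lemma enc_eq_snoc_iff:
  assumes vq: "valid t v q" and vq': "valid t v' q'"
  shows "enc t v' q' = enc t v q @ [k] \<longleftrightarrow> (v' = v \<and> q' = q @ [k]) \<or>
    (\<exists>a c. t v = Some (Inl a) \<and> h a (q @ [k]) = Some (Inr c) \<and> v' = v @ [c] \<and> q' = [])"
proof
  assume eq: "enc t v' q' = enc t v q @ [k]"
  have fp: "flat_pos (blocks t) (enc t v q @ [k]) = located t v' q'"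
    using flat_pos_enc[OF vq'] eq by simp
  from vq show "(v' = v \<and> q' = q @ [k]) \<or>
    (\<exists>a c. t v = Some (Inl a) \<and> h a (q @ [k]) = Some (Inr c) \<and> v' = v @ [c] \<and> q' = [])"
  proof (cases rule: validE)
    case (1 a)
    have step: "located t v' q' =
      (case h a (q @ [k]) of Some (Inl _) \<Rightarrow> Some (Inl (v, q @ [k]))
       | Some (Inr c) \<Rightarrow> located t (v @ [c]) [] | None \<Rightarrow> None)"
      using fp flat_pos_snoc_Inl[of t "enc t v q" v q a k] flat_pos_enc[OF vq] 1(2)
      by (simp add: located_def)
    show ?thesis
    proof (cases "h a (q @ [k])" rule: option_sum_exhaust)
      case (3 c)
      then have "t (v @ [c]) \<noteq> None" using step located_valid[OF vq'] by simp
      then have "valid t (v @ [c]) []" using valid_hole_child 1 3 by blast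
      then show ?thesis using located_inj[OF vq'] step 1 3 by auto
    qed (use step located_valid[OF vq'] in \<open>auto simp: located_def split: option.splits sum.splits\<close>)
  next
    case (2 j)
    then have "flat_pos (blocks t) (enc t v q) = Some (Inr j)"
      using flat_pos_enc[OF vq] by (simp add: located_def)
    then have "located t v' q' = None" using fp flat_pos_snoc_Inr by metis
    then show ?thesis using located_valid[OF vq'] by simp
  qed
next
  assume "(v' = v \<and> q' = q @ [k]) \<or>
    (\<exists>a c. t v = Some (Inl a) \<and> h a (q @ [k]) = Some (Inr c) \<and> v' = v @ [c] \<and> q' = [])"
  then show "enc t v' q' = enc t v q @ [k]" using enc_snoc_var by (auto simp: enc_def)
qed

lemma prefix_enc_imp:
  assumes vq: "valid t v q" and vq': "valid t v' q'" and "prefix (enc t v q) (enc t v' q')"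
  shows "(v' = v \<and> prefix q q') \<or> descends t v q v'"
proof -
  obtain r where "enc t v' q' = enc t v q @ r" using assms(3) by (auto simp: prefix_def)
  \<comment> \<open>every prefix of an encoded position is encoded (flat_pos_decode): walk along r step by step\<close>
  with vq' show ?thesis
  proof (induction r arbitrary: v' q' rule: rev_induct)
    case Nil
    then show ?case using enc_inj[OF vq] by fastforce
  next
    case (snoc k r)
    have "flat_pos (blocks t) (enc t v q @ r) \<noteq> None"
      using flat_pos_enc[OF snoc.prems(1)] located_valid[OF snoc.prems(1)] flat_pos_snoc_None snoc.prems(2)
      by (metis append_assoc)
    then obtain v'' q'' where vq'': "valid t v'' q''" and r: "enc t v q @ r = enc t v'' q''"
      using flat_pos_decode by blast
    have IH: "(v'' = v \<and> prefix q q'') \<or> descends t v q v''" using snoc.IH[OF vq'' r[symmetric]] .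
    have "enc t v' q' = enc t v'' q'' @ [k]" using snoc.prems(2) r by simp
    then have "(v' = v'' \<and> q' = q'' @ [k]) \<or>
      (\<exists>a c. t v'' = Some (Inl a) \<and> h a (q'' @ [k]) = Some (Inr c) \<and> v' = v'' @ [c] \<and> q' = [])"
      using enc_eq_snoc_iff[OF vq'' snoc.prems(1)] by blast
    then show ?case
    proof
      assume "\<exists>a c. t v'' = Some (Inl a) \<and> h a (q'' @ [k]) = Some (Inr c) \<and> v' = v'' @ [c] \<and> q' = []"
      then obtain a c where tv: "t v'' = Some (Inl a)" and hc: "h a (q'' @ [k]) = Some (Inr c)"
        and v': "v' = v'' @ [c]" by blast
      have "var_pos (h a) c = q'' @ [k]" using var_pos_eq[OF wf_h_label[OF tv] hc] .
      then have "v'' = v \<and> prefix q q'' \<longrightarrow> descends t v q v'"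
        using tv hc v' by (auto simp: descends_def holes_below_def has_var_def intro: prefix_order.trans)
      moreover have "descends t v q v'' \<longrightarrow> descends t v q v'"
        using v' by (auto simp: descends_def intro: prefix_order.trans)
      ultimately show ?case using IH by blast
    qed (use IH in \<open>auto simp: descends_def intro: prefix_order.trans\<close>)
  qed
qed

lemma prefix_enc_iff:
  "valid t v q \<Longrightarrow> valid t v' q' \<Longrightarrow>
   prefix (enc t v q) (enc t v' q') \<longleftrightarrow> (v' = v \<and> prefix q q') \<or> descends t v q v'"
  using prefix_enc_imp descends_prefix_enc by (auto simp: enc_def)

lemma enc_eq_Nil_iff: "valid t v q \<Longrightarrow> enc t v q = [] \<longleftrightarrow> v = [] \<and> q = []"
proof -
  assume vq: "valid t v q"
  have "block_pos t v = [] \<Longrightarrow> v = []"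
  proof (cases v rule: rev_cases)
    case (snoc w c)
    then obtain a where tw: "t w = Some (Inl a)" and hc: "has_var (h a) c"
      using vq by (auto simp: valid_def reached_snoc)
    then have "var_pos (h a) c \<noteq> []"
      using var_pos[OF wf_h_label[OF tw] hc] wf_tree_root[OF wf_h_label[OF tw]]
      by auto
    moreover assume "block_pos t v = []"
    ultimately show ?thesis using snoc by (simp add: block_pos_snoc_Inl[of t w a, OF tw])
  qed
  then show ?thesis by (auto simp: enc_def)
qed

end

end

section \<open>Derived first-order formulas\<close>

definition FFalse :: "'a fo" where
  "FFalse = FEx 0 (FNeg (FEq 0 0))"

definition FTrue :: "'a fo" where
  "FTrue = FNeg FFalse"

primrec fdisj :: "'a fo list \<Rightarrow> 'a fo" where
  "fdisj [] = FFalse"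
| "fdisj (f # fs) = FNeg (FConj (FNeg f) (FNeg (fdisj fs)))"

definition Disj :: "'a fo set \<Rightarrow> 'a fo" where
  "Disj F = fdisj (SOME fs. set fs = F)"

definition Conj :: "'a fo set \<Rightarrow> 'a fo" where
  "Conj F = FNeg (Disj (FNeg ` F))"

lemma holds_FFalse [simp]: "\<not> holds t FFalse e"
  and holds_FTrue [simp]: "holds t FTrue e"
  and fv_FFalse [simp]: "fv FFalse = {}"
  and fv_FTrue [simp]: "fv FTrue = {}"
  and fo_sig_FFalse [simp]: "fo_sig A n FFalse"
  and fo_sig_FTrue [simp]: "fo_sig A n FTrue"
  by (simp_all add: FTrue_def FFalse_def)

lemma holds_fdisj: "holds t (fdisj fs) e \<longleftrightarrow> (\<exists>f\<in>set fs. holds t f e)"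
  and fv_fdisj: "fv (fdisj fs) = \<Union> (fv ` set fs)"
  and fo_sig_fdisj: "fo_sig A n (fdisj fs) \<longleftrightarrow> (\<forall>f\<in>set fs. fo_sig A n f)"
  by (induction fs) auto

lemma set_Disj_list: "finite F \<Longrightarrow> set (SOME fs. set fs = F) = F"
  by (rule someI_ex) (rule finite_list)

lemma holds_Disj: "finite F \<Longrightarrow> holds t (Disj F) e \<longleftrightarrow> (\<exists>f\<in>F. holds t f e)"
  and fv_Disj: "finite F \<Longrightarrow> fv (Disj F) = \<Union> (fv ` F)"
  and fo_sig_Disj: "finite F \<Longrightarrow> fo_sig A n (Disj F) \<longleftrightarrow> (\<forall>f\<in>F. fo_sig A n f)"
  by (simp_all add: Disj_def holds_fdisj fv_fdisj fo_sig_fdisj set_Disj_list)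

lemma holds_Conj: "finite F \<Longrightarrow> holds t (Conj F) e \<longleftrightarrow> (\<forall>f\<in>F. holds t f e)"
  and fv_Conj: "finite F \<Longrightarrow> fv (Conj F) = \<Union> (fv ` F)"
  and fo_sig_Conj: "finite F \<Longrightarrow> fo_sig A n (Conj F) \<longleftrightarrow> (\<forall>f\<in>F. fo_sig A n f)"
  by (simp_all add: Conj_def holds_Disj fv_Disj fo_sig_Disj)

lemma holds_cong: "\<forall>i\<in>fv f. e i = e' i \<Longrightarrow> holds t f e = holds t f e'"
proof (induction f arbitrary: e e')
  case (FEx x f)
  have "holds t f (e(x := p)) = holds t f (e'(x := p))" for p
    by (rule FEx.IH) (use FEx.prems in auto)
  then show ?case by simp
next
  case (FConj f g)
  have "holds t f e = holds t f e'" "holds t g e = holds t g e'"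
    by (rule FConj.IH; use FConj.prems in simp)+
  then show ?case by simp
qed simp_all

definition below_child_fo :: "nat \<Rightarrow> nat \<Rightarrow> nat \<Rightarrow> nat \<Rightarrow> 'a fo" where
  "below_child_fo c x y w = FEx w (FConj (FSucc c x w) (FLe w y))"

lemma fv_below_child_fo: "fv (below_child_fo c x y w) = {x, y} - {w}"
  by (auto simp: below_child_fo_def)

lemma fo_sig_below_child_fo [simp]: "fo_sig A n (below_child_fo c x y w)"
  by (simp add: below_child_fo_def)

lemma holds_below_child_fo:
  assumes wt: "wf_tree A ar k t" and "t (e y) \<noteq> None" "w \<noteq> x" "w \<noteq> y"
  shows "holds t (below_child_fo c x y w) e \<longleftrightarrow> prefix (e x @ [c]) (e y)"
  using assms wf_tree_prefix[OF wt \<open>t (e y) \<noteq> None\<close>, of "e x @ [c]"]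
  by (auto simp: below_child_fo_def prefix_def)

definition kind_fo :: "'a + nat \<Rightarrow> nat \<Rightarrow> 'a fo" where
  "kind_fo K z = (case K of Inl a \<Rightarrow> FLab a z | Inr j \<Rightarrow> FVar j z)"

lemma holds_kind_fo: "holds t (kind_fo K z) e \<longleftrightarrow> t (e z) = Some K"
  and fv_kind_fo: "fv (kind_fo K z) = {z}"
  and fo_sig_kind_fo: "fo_sig A n (kind_fo K z) \<longleftrightarrow> K \<in> Inl ` A \<union> Inr ` {..<n}"
  by (cases K; auto simp: kind_fo_def)+

definition distinct_fo :: "nat \<Rightarrow> nat set \<Rightarrow> 'a fo" where
  "distinct_fo z B = Conj ((\<lambda>b. FNeg (FEq z b)) ` B)"

lemma holds_distinct_fo: "finite B \<Longrightarrow> holds t (distinct_fo z B) e \<longleftrightarrow> (\<forall>b\<in>B. e z \<noteq> e b)"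
  and fv_distinct_fo: "finite B \<Longrightarrow> fv (distinct_fo z B) \<subseteq> insert z B"
  and fo_sig_distinct_fo: "finite B \<Longrightarrow> fo_sig A n (distinct_fo z B)"
  by (auto simp: distinct_fo_def holds_Conj fv_Conj fo_sig_Conj)

section \<open>Translating formulas over flat (blocks t) into formulas over t\<close>

locale fo_translation = block_subst Sig ar Gam arG h
  for Sig :: "'a set" and ar and Gam :: "'b set" and arG and h +
  fixes n :: nat
  assumes finite_Sig: "finite Sig"
begin

definition kinds :: "('a + nat) set" where
  "kinds = Inl ` Sig \<union> Inr ` {..<n}"

lemma finite_kinds: "finite kinds"
  using finite_Sig by (simp add: kinds_def)

text \<open>A formula variable i over flat (blocks t) is interpreted by the vertex enc t (ve (\<beta> i)) (qe i):
  the variables are grouped into blocks, \<beta> i \<in> B being a variable of t that holds the vertex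
  ve (\<beta> i) of kind L (\<beta> i), and qe i the position inside its block.\<close>

definition holds_flat :: "'b fo \<Rightarrow> (nat \<Rightarrow> nat) \<Rightarrow> 'a rtree \<Rightarrow> (nat \<Rightarrow> nat list) \<Rightarrow> (nat \<Rightarrow> nat list) \<Rightarrow> bool" where
  "holds_flat \<psi> \<beta> t ve qe \<longleftrightarrow> holds (flat (blocks t)) \<psi> (\<lambda>i. enc t (ve (\<beta> i)) (qe i))"

definition consistent :: "'a rtree \<Rightarrow> (nat \<Rightarrow> nat) \<Rightarrow> (nat \<Rightarrow> 'a + nat) \<Rightarrow> nat set \<Rightarrow> nat set
    \<Rightarrow> (nat \<Rightarrow> nat list) \<Rightarrow> (nat \<Rightarrow> nat list) \<Rightarrow> bool" where
  "consistent t \<beta> L B V ve qe \<longleftrightarrow> (\<forall>b\<in>B. reached t (ve b) \<and> t (ve b) = Some (L b)) \<and> inj_on ve B \<and>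
     (\<forall>i\<in>V. \<beta> i \<in> B \<and> qe i \<in> inner (L (\<beta> i)))"

definition depends_on_block :: "(nat \<Rightarrow> nat) \<Rightarrow> nat set \<Rightarrow> nat \<Rightarrow> ((nat \<Rightarrow> nat list) \<Rightarrow> 'c) \<Rightarrow> bool" where
  "depends_on_block \<beta> V b F \<longleftrightarrow> (\<forall>qe qe'. (\<forall>i\<in>V. \<beta> i = b \<longrightarrow> qe i = qe' i) \<longrightarrow> F qe = F qe')"

text \<open>The heart of the translation: \<Phi> is decided by a formula over t in the block variables, chosen
  according to a colouring of the blocks by finitely many colours, where the colour of a block depends
  only on the inner positions of its own variables.\<close>

definition expressible :: "(nat \<Rightarrow> nat) \<Rightarrow> (nat \<Rightarrow> 'a + nat) \<Rightarrow> nat set \<Rightarrow> nat set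
    \<Rightarrow> ('a rtree \<Rightarrow> (nat \<Rightarrow> nat list) \<Rightarrow> (nat \<Rightarrow> nat list) \<Rightarrow> bool) \<Rightarrow> bool" where
  "expressible \<beta> L B V \<Phi> \<longleftrightarrow> (\<exists>(col :: nat \<Rightarrow> (nat \<Rightarrow> nat list) \<Rightarrow> nat) \<theta>.
     (\<forall>b. finite (range (col b)) \<and> depends_on_block \<beta> V b (col b)) \<and>
     (\<forall>c. fo_sig Sig n (\<theta> c) \<and> fv (\<theta> c) \<subseteq> B) \<and>
     (\<forall>t ve qe. wf_tree Sig ar n t \<longrightarrow> consistent t \<beta> L B V ve qe \<longrightarrow>
        (\<Phi> t ve qe \<longleftrightarrow> holds t (\<theta> (\<lambda>b. col b qe)) ve)))"

lemma expressibleI: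
  fixes col :: "nat \<Rightarrow> (nat \<Rightarrow> nat list) \<Rightarrow> nat"
  assumes "\<And>b. finite (range (col b))" and "\<And>b. depends_on_block \<beta> V b (col b)"
    and "\<And>c. fo_sig Sig n (\<theta> c)" and "\<And>c. fv (\<theta> c) \<subseteq> B"
    and "\<And>t ve qe. wf_tree Sig ar n t \<Longrightarrow> consistent t \<beta> L B V ve qe \<Longrightarrow>
      \<Phi> t ve qe \<longleftrightarrow> holds t (\<theta> (\<lambda>b. col b qe)) ve"
  shows "expressible \<beta> L B V \<Phi>"
  unfolding expressible_def using assms by blast

lemma expressibleE:
  assumes "expressible \<beta> L B V \<Phi>"
  obtains col :: "nat \<Rightarrow> (nat \<Rightarrow> nat list) \<Rightarrow> nat" and \<theta>
  where "\<And>b. finite (range (col b))" and "\<And>b. depends_on_block \<beta> V b (col b)"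
    and "\<And>c. fo_sig Sig n (\<theta> c)" and "\<And>c. fv (\<theta> c) \<subseteq> B"
    and "\<And>t ve qe. wf_tree Sig ar n t \<Longrightarrow> consistent t \<beta> L B V ve qe \<Longrightarrow>
      \<Phi> t ve qe \<longleftrightarrow> holds t (\<theta> (\<lambda>b. col b qe)) ve"
  using assms unfolding expressible_def by (elim exE conjE) (rule that; simp)

lemma expressible_cong:
  assumes "expressible \<beta> L B V \<Phi>"
    and "\<And>t ve qe. wf_tree Sig ar n t \<Longrightarrow> consistent t \<beta> L B V ve qe \<Longrightarrow> \<Phi>' t ve qe \<longleftrightarrow> \<Phi> t ve qe"
  shows "expressible \<beta> L B V \<Phi>'"
  using assms unfolding expressible_def by simp

lemma expressible_holds:
  assumes "fo_sig Sig n \<theta>" "fv \<theta> \<subseteq> B"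
  shows "expressible \<beta> L B V (\<lambda>t ve qe. holds t \<theta> ve)"
  by (rule expressibleI[where col = "\<lambda>b qe. 0" and \<theta> = "\<lambda>c. \<theta>"])
    (use assms in \<open>auto simp: depends_on_block_def\<close>)

lemma expressible_block:
  assumes "depends_on_block \<beta> V b P"
  shows "expressible \<beta> L B V (\<lambda>t ve qe. P qe)"
proof (rule expressibleI[where col = "\<lambda>b' qe. if b' = b \<and> P qe then 1 else 0"
      and \<theta> = "\<lambda>c. if c b = 1 then FTrue else FFalse"])
  show "finite (range (\<lambda>qe. if b' = b \<and> P qe then 1 else 0 :: nat))" for b'
    by (rule finite_subset[of _ "{0, 1}"]) auto
  show "depends_on_block \<beta> V b' (\<lambda>qe. if b' = b \<and> P qe then 1 else 0 :: nat)" for b'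
    using assms by (auto simp: depends_on_block_def)
qed auto

lemma expressible_const: "expressible \<beta> L B V (\<lambda>t ve qe. P)"
  using expressible_block[of \<beta> V 0 "\<lambda>qe. P"] by (simp add: depends_on_block_def)

lemma expressible_neg:
  assumes "expressible \<beta> L B V \<Phi>"
  shows "expressible \<beta> L B V (\<lambda>t ve qe. \<not> \<Phi> t ve qe)"
proof -
  obtain col :: "nat \<Rightarrow> (nat \<Rightarrow> nat list) \<Rightarrow> nat" and \<theta> where
    "\<forall>b. finite (range (col b)) \<and> depends_on_block \<beta> V b (col b)"
    "\<forall>c. fo_sig Sig n (\<theta> c) \<and> fv (\<theta> c) \<subseteq> B"
    "\<forall>t ve qe. wf_tree Sig ar n t \<longrightarrow> consistent t \<beta> L B V ve qe \<longrightarrow>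
      (\<Phi> t ve qe \<longleftrightarrow> holds t (\<theta> (\<lambda>b. col b qe)) ve)"
    using assms unfolding expressible_def by blast
  then show ?thesis unfolding expressible_def by (intro exI[of _ col] exI[of _ "\<lambda>c. FNeg (\<theta> c)"]) simp
qed

lemma expressible_conj:
  assumes "expressible \<beta> L B V \<Phi>1" and "expressible \<beta> L B V \<Phi>2"
  shows "expressible \<beta> L B V (\<lambda>t ve qe. \<Phi>1 t ve qe \<and> \<Phi>2 t ve qe)"
proof -
  obtain col1 :: "nat \<Rightarrow> (nat \<Rightarrow> nat list) \<Rightarrow> nat" and \<theta>1
    where 1: "\<And>b. finite (range (col1 b))" "\<And>b. depends_on_block \<beta> V b (col1 b)"
      "\<And>c. fo_sig Sig n (\<theta>1 c)" "\<And>c. fv (\<theta>1 c) \<subseteq> B"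
      "\<And>t ve qe. wf_tree Sig ar n t \<Longrightarrow> consistent t \<beta> L B V ve qe \<Longrightarrow>
        \<Phi>1 t ve qe \<longleftrightarrow> holds t (\<theta>1 (\<lambda>b. col1 b qe)) ve"
    using assms(1) by (rule expressibleE) (rule that)
  obtain col2 :: "nat \<Rightarrow> (nat \<Rightarrow> nat list) \<Rightarrow> nat" and \<theta>2
    where 2: "\<And>b. finite (range (col2 b))" "\<And>b. depends_on_block \<beta> V b (col2 b)"
      "\<And>c. fo_sig Sig n (\<theta>2 c)" "\<And>c. fv (\<theta>2 c) \<subseteq> B"
      "\<And>t ve qe. wf_tree Sig ar n t \<Longrightarrow> consistent t \<beta> L B V ve qe \<Longrightarrow>
        \<Phi>2 t ve qe \<longleftrightarrow> holds t (\<theta>2 (\<lambda>b. col2 b qe)) ve"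
    using assms(2) by (rule expressibleE) (rule that)
  show ?thesis
  proof (rule expressibleI[where col = "\<lambda>b qe. prod_encode (col1 b qe, col2 b qe)"
        and \<theta> = "\<lambda>c. FConj (\<theta>1 (\<lambda>b. fst (prod_decode (c b)))) (\<theta>2 (\<lambda>b. snd (prod_decode (c b))))"])
    show "finite (range (\<lambda>qe. prod_encode (col1 b qe, col2 b qe)))" for b
      by (rule finite_subset[of _ "prod_encode ` (range (col1 b) \<times> range (col2 b))"])
        (use 1(1) 2(1) in auto)
    show "depends_on_block \<beta> V b (\<lambda>qe. prod_encode (col1 b qe, col2 b qe))" for b
      using 1(2) 2(2) by (simp add: depends_on_block_def)
  qed (use 1 2 in simp_all)
qed

lemma expressible_disj:
  assumes "expressible \<beta> L B V \<Phi>1" and "expressible \<beta> L B V \<Phi>2"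
  shows "expressible \<beta> L B V (\<lambda>t ve qe. \<Phi>1 t ve qe \<or> \<Phi>2 t ve qe)"
  using expressible_neg[OF expressible_conj[OF expressible_neg[OF assms(1)] expressible_neg[OF assms(2)]]]
  by simp

lemma expressible_Bex:
  assumes "finite F" and "\<And>x. x \<in> F \<Longrightarrow> expressible \<beta> L B V (P x)"
  shows "expressible \<beta> L B V (\<lambda>t ve qe. \<exists>x\<in>F. P x t ve qe)"
  using assms
proof (induction F rule: finite_induct)
  case empty
  then show ?case using expressible_const[of \<beta> L B V False] by simp
next
  case (insert x F)
  then show ?case using expressible_disj[of \<beta> L B V "P x"] by simp
qed

lemma expressible_var: "i \<in> V \<Longrightarrow> expressible \<beta> L B V (\<lambda>t ve qe. P (qe i))"
  by (rule expressible_block[where b = "\<beta> i"]) (simp add: depends_on_block_def)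

lemma expressible_vars:
  "i \<in> V \<Longrightarrow> j \<in> V \<Longrightarrow> \<beta> j = \<beta> i \<Longrightarrow> expressible \<beta> L B V (\<lambda>t ve qe. P (qe i) (qe j))"
  by (rule expressible_block[where b = "\<beta> i"]) (simp add: depends_on_block_def)

lemma consistent_valid: "consistent t \<beta> L B V ve qe \<Longrightarrow> i \<in> V \<Longrightarrow> valid t (ve (\<beta> i)) (qe i)"
  unfolding consistent_def valid_def by blast

lemma consistent_label: "consistent t \<beta> L B V ve qe \<Longrightarrow> i \<in> V \<Longrightarrow> t (ve (\<beta> i)) = Some (L (\<beta> i))"
  unfolding consistent_def by blast

lemma consistent_same_block:
  "consistent t \<beta> L B V ve qe \<Longrightarrow> i \<in> V \<Longrightarrow> j \<in> V \<Longrightarrow> ve (\<beta> i) = ve (\<beta> j) \<Longrightarrow> \<beta> i = \<beta> j"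
  unfolding consistent_def by (meson inj_onD)

lemma expressible_FRoot:
  assumes "i \<in> V" "\<beta> ` V \<subseteq> B"
  shows "expressible \<beta> L B V (holds_flat (FRoot i) \<beta>)"
proof -
  have "expressible \<beta> L B V (\<lambda>t ve qe. holds t (FRoot (\<beta> i)) ve \<and> qe i = [])"
    using assms by (intro expressible_conj expressible_holds expressible_var) auto
  then show ?thesis
    by (rule expressible_cong) (use assms in \<open>simp add: holds_flat_def enc_eq_Nil_iff consistent_valid\<close>)
qed

lemma expressible_FLab:
  assumes "i \<in> V"
  shows "expressible \<beta> L B V (holds_flat (FLab c i) \<beta>)"
proof -
  have "expressible \<beta> L B V (\<lambda>t ve qe. kind_label (L (\<beta> i)) (qe i) = Some (Inl c))"
    using assms by (intro expressible_var)
  then show ?thesis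
    by (rule expressible_cong)
      (use assms in \<open>simp add: holds_flat_def flat_enc consistent_valid consistent_label\<close>)
qed

lemma expressible_FVar:
  assumes "i \<in> V"
  shows "expressible \<beta> L B V (holds_flat (FVar j i) \<beta>)"
proof -
  have "expressible \<beta> L B V (\<lambda>t ve qe. kind_label (L (\<beta> i)) (qe i) = Some (Inr j))"
    using assms by (intro expressible_var)
  then show ?thesis
    by (rule expressible_cong)
      (use assms in \<open>simp add: holds_flat_def flat_enc consistent_valid consistent_label\<close>)
qed

lemma expressible_FEq:
  assumes "i \<in> V" "j \<in> V"
  shows "expressible \<beta> L B V (holds_flat (FEq i j) \<beta>)"
proof (cases "\<beta> j = \<beta> i")
  case True
  have "expressible \<beta> L B V (\<lambda>t ve qe. qe i = qe j)"
    using assms True by (intro expressible_vars)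
  then show ?thesis by (rule expressible_cong) (use True in \<open>simp add: holds_flat_def enc_def\<close>)
next
  case False
  have "\<not> holds_flat (FEq i j) \<beta> t ve qe"
    if wt: "wf_tree Sig ar n t" and cons: "consistent t \<beta> L B V ve qe" for t ve qe
    using enc_inj[OF wt consistent_valid[OF cons assms(1)] consistent_valid[OF cons assms(2)]]
      consistent_same_block[OF cons assms] False
    by (auto simp: holds_flat_def)
  then show ?thesis using expressible_cong[OF expressible_const[of \<beta> L B V False]] by blast
qed

definition child_indices :: "nat set" where
  "child_indices = (\<Union>a\<in>Sig. {..<ar a})"

lemma finite_child_indices: "finite child_indices"
  using finite_Sig by (simp add: child_indices_def)

lemma child_indices_hole:
  "wf_tree Sig ar n t \<Longrightarrow> t v = Some (Inl a) \<Longrightarrow> has_var (h a) c \<Longrightarrow> c \<in> child_indices"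
  using label_in_Sig has_var_less[OF wf_h_label] by (fastforce simp: child_indices_def)

lemma holds_flat_FLe_distinct:
  assumes wt: "wf_tree Sig ar n t" and cons: "consistent t \<beta> L B V ve qe"
    and i: "i \<in> V" and j: "j \<in> V" and "\<beta> j \<noteq> \<beta> i"
  shows "holds_flat (FLe i j) \<beta> t ve qe \<longleftrightarrow>
    (\<exists>c\<in>holes_below (L (\<beta> i)) (qe i). prefix (ve (\<beta> i) @ [c]) (ve (\<beta> j)))"
proof -
  have "holds_flat (FLe i j) \<beta> t ve qe \<longleftrightarrow> descends t (ve (\<beta> i)) (qe i) (ve (\<beta> j))"
    using prefix_enc_iff[OF wt consistent_valid[OF cons i] consistent_valid[OF cons j]]
      consistent_same_block[OF cons j i] assms(5)
    by (auto simp: holds_flat_def prefix_def)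
  then show ?thesis using consistent_label[OF cons i] by (auto simp: descends_def)
qed

lemma holds_flat_FSucc_distinct:
  assumes wt: "wf_tree Sig ar n t" and cons: "consistent t \<beta> L B V ve qe"
    and i: "i \<in> V" and j: "j \<in> V" and "\<beta> j \<noteq> \<beta> i"
  shows "holds_flat (FSucc k i j) \<beta> t ve qe \<longleftrightarrow> (\<exists>a c. L (\<beta> i) = Inl a \<and>
    h a (qe i @ [k]) = Some (Inr c) \<and> ve (\<beta> j) = ve (\<beta> i) @ [c] \<and> qe j = [])"
  using enc_eq_snoc_iff[OF wt consistent_valid[OF cons i] consistent_valid[OF cons j]]
    consistent_same_block[OF cons j i] assms(5) consistent_label[OF cons i]
  by (auto simp: holds_flat_def)

lemma expressible_FLe:
  assumes i: "i \<in> V" and j: "j \<in> V" and "\<beta> ` V \<subseteq> B" "finite B"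
  shows "expressible \<beta> L B V (holds_flat (FLe i j) \<beta>)"
proof (cases "\<beta> j = \<beta> i")
  case True
  have "expressible \<beta> L B V (\<lambda>t ve qe. prefix (qe i) (qe j))"
    using assms True by (intro expressible_vars)
  then show ?thesis
    by (rule expressible_cong) (use True in \<open>simp add: holds_flat_def prefix_def enc_def\<close>)
next
  case False
  obtain w where w: "w \<notin> B" using ex_new_if_finite[OF infinite_UNIV_nat \<open>finite B\<close>] by blast
  have "expressible \<beta> L B V (\<lambda>t ve qe. \<exists>c\<in>child_indices. c \<in> holes_below (L (\<beta> i)) (qe i) \<and>
      holds t (below_child_fo c (\<beta> i) (\<beta> j) w) ve)"
    using assms w finite_child_indices
    by (intro expressible_Bex expressible_conj expressible_var expressible_holds)
      (auto simp: fv_below_child_fo)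
  then show ?thesis
  proof (rule expressible_cong)
    fix t ve qe assume wt: "wf_tree Sig ar n t" and cons: "consistent t \<beta> L B V ve qe"
    have "w \<noteq> \<beta> i" "w \<noteq> \<beta> j" "t (ve (\<beta> j)) \<noteq> None"
      using w i j assms(3) consistent_label[OF cons j] by auto
    then show "holds_flat (FLe i j) \<beta> t ve qe \<longleftrightarrow> (\<exists>c\<in>child_indices. c \<in> holes_below (L (\<beta> i)) (qe i) \<and>
        holds t (below_child_fo c (\<beta> i) (\<beta> j) w) ve)"
      using holds_flat_FLe_distinct[OF wt cons i j False] holds_below_child_fo[OF wt]
        child_indices_hole[OF wt] consistent_label[OF cons i]
      by (auto simp: holes_below_def)
  qed
qed

lemma expressible_FSucc:
  assumes i: "i \<in> V" and j: "j \<in> V" and "\<beta> ` V \<subseteq> B"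
  shows "expressible \<beta> L B V (holds_flat (FSucc k i j) \<beta>)"
proof (cases "\<beta> j = \<beta> i")
  case True
  have "expressible \<beta> L B V (\<lambda>t ve qe. qe j = qe i @ [k])"
    using assms True by (intro expressible_vars)
  then show ?thesis
    by (rule expressible_cong) (use True in \<open>simp add: holds_flat_def enc_def\<close>)
next
  case False
  have "expressible \<beta> L B V (\<lambda>t ve qe. \<exists>c\<in>child_indices.
      (\<exists>a. L (\<beta> i) = Inl a \<and> h a (qe i @ [k]) = Some (Inr c)) \<and>
      holds t (FSucc c (\<beta> i) (\<beta> j)) ve \<and> qe j = [])"
    using assms finite_child_indices
    by (intro expressible_Bex expressible_conj expressible_var expressible_holds) auto
  then show ?thesis
    by (rule expressible_cong)
      (use holds_flat_FSucc_distinct[OF _ _ i j False] consistent_label[OF _ i] child_indices_hole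
        in \<open>fastforce simp: has_var_def\<close>)
qed

lemma consistent_inner_update:
  "consistent t \<beta> L B V ve qe \<Longrightarrow> b \<in> B \<Longrightarrow> q \<in> inner (L b) \<Longrightarrow>
   consistent t (\<beta>(x := b)) L B (insert x V) ve (qe(x := q))"
  unfolding consistent_def by auto

lemma consistent_block_update:
  assumes "consistent t \<beta> L B V ve qe" "z \<notin> B" "\<beta> ` V \<subseteq> B"
    and "reached t v" "t v = Some K" "v \<notin> ve ` B"
  shows "consistent t \<beta> (L(z := K)) (insert z B) V (ve(z := v)) qe"
proof -
  have "\<forall>i\<in>V. \<beta> i \<noteq> z" using assms(2,3) by auto
  moreover have "inj_on (ve(z := v)) (insert z B)"
    using assms(1,2,6) unfolding consistent_def by (auto simp: inj_on_def)
  ultimately show ?thesis using assms unfolding consistent_def by auto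
qed

lemma depends_on_blockI:
  "(\<And>qe qe'. (\<And>i. i \<in> V \<Longrightarrow> \<beta> i = b \<Longrightarrow> qe i = qe' i) \<Longrightarrow> F qe = F qe') \<Longrightarrow> depends_on_block \<beta> V b F"
  unfolding depends_on_block_def by blast

lemma depends_on_blockD:
  "depends_on_block \<beta> V b F \<Longrightarrow> (\<And>i. i \<in> V \<Longrightarrow> \<beta> i = b \<Longrightarrow> qe i = qe' i) \<Longrightarrow> F qe = F qe'"
  unfolding depends_on_block_def by blast

lemma depends_on_block_upd:
  "depends_on_block (\<beta>(x := b)) (insert x V) b' F \<Longrightarrow> depends_on_block \<beta> V b' (\<lambda>qe. F (qe(x := q)))"
  by (rule depends_on_blockI, erule depends_on_blockD) auto

lemma depends_on_block_other:
  "depends_on_block (\<beta>(x := b)) (insert x V) b' F \<Longrightarrow> b' \<noteq> b \<Longrightarrow> F (qe(x := q)) = F qe"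
  by (erule depends_on_blockD) auto

lemma finite_range_colour_set:
  "finite (range F) \<Longrightarrow> finite (range (\<lambda>qe. set_encode ((\<lambda>q. F (qe(x := q))) ` Q)))"
  by (rule finite_subset[of _ "set_encode ` Pow (range F)"]) auto

lemma depends_on_block_colour_set:
  assumes "depends_on_block (\<beta>(x := b)) (insert x V) b F"
  shows "depends_on_block \<beta> V b (\<lambda>qe. set_encode ((\<lambda>q. F (qe(x := q))) ` Q))"
proof (rule depends_on_blockI)
  fix qe qe' :: "nat \<Rightarrow> nat list" assume "\<And>i. i \<in> V \<Longrightarrow> \<beta> i = b \<Longrightarrow> qe i = qe' i"
  then have "F (qe(x := q)) = F (qe'(x := q))" for q
    using depends_on_blockD[OF depends_on_block_upd[OF assms]] by blast
  then show "set_encode ((\<lambda>q. F (qe(x := q))) ` Q) = set_encode ((\<lambda>q. F (qe'(x := q))) ` Q)" by simp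
qed

text \<open>Quantifying the inner position of a variable in block b: the new colour of b is the set of
  colours that b can take for the possible positions, coded by set_encode.\<close>

lemma expressible_exists_inner:
  assumes "expressible (\<beta>(x := b)) L B (insert x V) \<Phi>" and "b \<in> B"
  shows "expressible \<beta> L B V (\<lambda>t ve qe. \<exists>q\<in>inner (L b). \<Phi> t ve (qe(x := q)))"
proof -
  obtain col :: "nat \<Rightarrow> (nat \<Rightarrow> nat list) \<Rightarrow> nat" and \<theta>
    where fin: "\<And>b'. finite (range (col b'))"
      and dep: "\<And>b'. depends_on_block (\<beta>(x := b)) (insert x V) b' (col b')"
      and sig: "\<And>c. fo_sig Sig n (\<theta> c)" and fv: "\<And>c. fv (\<theta> c) \<subseteq> B"
      and \<Phi>: "\<And>t ve qe. wf_tree Sig ar n t \<Longrightarrow> consistent t (\<beta>(x := b)) L B (insert x V) ve qe \<Longrightarrow>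
        \<Phi> t ve qe \<longleftrightarrow> holds t (\<theta> (\<lambda>b'. col b' qe)) ve"
    using assms(1) by (rule expressibleE) (rule that)
  define S where "S qe = (\<lambda>q. col b (qe(x := q))) ` inner (L b)" for qe
  define col' where "col' b' qe = (if b' = b then set_encode (S qe) else col b' qe)" for b' qe
  have S_fin: "finite (S qe)" for qe
    using fin[of b] by (rule finite_subset[rotated]) (auto simp: S_def)
  note col_other = depends_on_block_other[OF dep]
  have col_b: "col' b = (\<lambda>qe. set_encode ((\<lambda>q. col b (qe(x := q))) ` inner (L b)))"
    by (simp add: fun_eq_iff col'_def S_def)
  have col_b': "col' b' = col b'" if "b' \<noteq> b" for b'
    using that by (simp add: fun_eq_iff col'_def)
  show ?thesis
  proof (rule expressibleI[where col = col' and \<theta> = "\<lambda>c. Disj ((\<lambda>k. \<theta> (c(b := k))) ` set_decode (c b))"])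
    show "finite (range (col' b'))" for b'
      using finite_range_colour_set[OF fin] fin by (cases "b' = b") (simp_all add: col_b col_b')
    show "depends_on_block \<beta> V b' (col' b')" for b'
      using depends_on_block_colour_set[OF dep] depends_on_block_upd[OF dep, of b' undefined]
      by (cases "b' = b") (simp_all add: col_b col_b' col_other)
    show "fo_sig Sig n (Disj ((\<lambda>k. \<theta> (c(b := k))) ` set_decode (c b)))" for c
      by (simp add: fo_sig_Disj sig)
    show "fv (Disj ((\<lambda>k. \<theta> (c(b := k))) ` set_decode (c b))) \<subseteq> B" for c
      using fv by (auto simp: fv_Disj)
  next
    fix t ve qe assume wt: "wf_tree Sig ar n t" and cons: "consistent t \<beta> L B V ve qe"
    have "(\<lambda>b'. col b' (qe(x := q))) = (\<lambda>b'. col' b' qe)(b := col b (qe(x := q)))" for q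
      by (auto simp: col'_def col_other)
    then have "(\<exists>q\<in>inner (L b). \<Phi> t ve (qe(x := q))) \<longleftrightarrow>
        (\<exists>q\<in>inner (L b). holds t (\<theta> ((\<lambda>b'. col' b' qe)(b := col b (qe(x := q))))) ve)"
      using \<Phi>[OF wt consistent_inner_update[OF cons \<open>b \<in> B\<close>]] by auto
    also have "\<dots> \<longleftrightarrow> (\<exists>k\<in>S qe. holds t (\<theta> ((\<lambda>b'. col' b' qe)(b := k))) ve)"
      by (auto simp: S_def)
    also have "\<dots> \<longleftrightarrow> holds t (Disj ((\<lambda>k. \<theta> ((\<lambda>b'. col' b' qe)(b := k))) ` set_decode (col' b qe))) ve"
      using S_fin by (simp add: holds_Disj col'_def)
    finally show "(\<exists>q\<in>inner (L b). \<Phi> t ve (qe(x := q))) \<longleftrightarrow>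
        holds t (Disj ((\<lambda>k. \<theta> ((\<lambda>b'. col' b' qe)(b := k))) ` set_decode (col' b qe))) ve" .
  qed
qed

text \<open>The characterisation reached_iff as a formula in z, with Suc z and Suc (Suc z) as bound
  variables: no edge above z leaves a vertex labelled a through a child c whose variable does not
  occur in h a.\<close>

definition reached_fo :: "nat \<Rightarrow> 'a fo" where
  "reached_fo z = Conj ((\<lambda>(a, c). FNeg (FEx (Suc z) (FConj (FLab a (Suc z))
       (below_child_fo c (Suc z) z (Suc (Suc z))))))
     ` {(a, c). a \<in> Sig \<and> c < ar a \<and> \<not> has_var (h a) c})"

lemma finite_bad_edges: "finite {(a, c). a \<in> Sig \<and> c < ar a \<and> \<not> has_var (h a) c}"
  by (rule finite_subset[of _ "Sig \<times> (\<Union>a\<in>Sig. {..<ar a})"]) (use finite_Sig in auto)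

lemma fv_reached_fo: "fv (reached_fo z) \<subseteq> {z}"
  and fo_sig_reached_fo: "fo_sig Sig n (reached_fo z)"
  using finite_bad_edges
  by (auto simp: reached_fo_def fv_Conj fo_sig_Conj fv_below_child_fo)

lemma holds_reached_fo:
  assumes wt: "wf_tree Sig ar n t" and "t (e z) \<noteq> None"
  shows "holds t (reached_fo z) e \<longleftrightarrow> reached t (e z)"
proof -
  have "holds t (below_child_fo c (Suc z) z (Suc (Suc z))) (e(Suc z := y)) \<longleftrightarrow> prefix (y @ [c]) (e z)"
    for y c using holds_below_child_fo[OF wt, of "e(Suc z := y)" z "Suc (Suc z)" "Suc z" c] assms(2)
    by simp
  then have "holds t (reached_fo z) e \<longleftrightarrow> (\<forall>a c. a \<in> Sig \<and> c < ar a \<and> \<not> has_var (h a) c \<longrightarrow>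
      \<not> (\<exists>y. t y = Some (Inl a) \<and> prefix (y @ [c]) (e z)))"
    using finite_bad_edges by (auto simp: reached_fo_def holds_Conj)
  also have "\<dots> \<longleftrightarrow> (\<forall>y a c. t y = Some (Inl a) \<longrightarrow> prefix (y @ [c]) (e z) \<longrightarrow> has_var (h a) c)"
  proof -
    have "a \<in> Sig \<and> c < ar a" if "t y = Some (Inl a)" "prefix (y @ [c]) (e z)" for y a c
      using that wf_tree_Inl[OF wt] wf_tree_prefix[OF wt assms(2)] by blast
    then show ?thesis by blast
  qed
  finally show ?thesis using reached_iff[OF wt] assms(2) by blast
qed

definition new_block_fo :: "'a + nat \<Rightarrow> nat \<Rightarrow> nat set \<Rightarrow> 'a fo \<Rightarrow> 'a fo" where
  "new_block_fo K z B \<phi> = FEx z (FConj (kind_fo K z) (FConj (reached_fo z) (FConj (distinct_fo z B) \<phi>)))"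

lemma holds_new_block_fo:
  assumes "wf_tree Sig ar n t" "finite B" "z \<notin> B"
  shows "holds t (new_block_fo K z B \<phi>) e \<longleftrightarrow>
    (\<exists>v. reached t v \<and> t v = Some K \<and> v \<notin> e ` B \<and> holds t \<phi> (e(z := v)))"
  using holds_reached_fo[OF assms(1)] assms(2,3)
  by (auto simp: new_block_fo_def holds_kind_fo holds_distinct_fo)

lemma fv_new_block_fo: "finite B \<Longrightarrow> fv \<phi> \<subseteq> insert z B \<Longrightarrow> fv (new_block_fo K z B \<phi>) \<subseteq> B"
  using fv_reached_fo[of z] fv_distinct_fo[of B z] by (auto simp: new_block_fo_def fv_kind_fo)

lemma fo_sig_new_block_fo:
  "finite B \<Longrightarrow> K \<in> kinds \<Longrightarrow> fo_sig Sig n \<phi> \<Longrightarrow> fo_sig Sig n (new_block_fo K z B \<phi>)"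
  by (simp add: new_block_fo_def fo_sig_kind_fo fo_sig_reached_fo fo_sig_distinct_fo kinds_def)

text \<open>The colour of a fresh block z is constant since no variable lives in it yet.\<close>

lemma expressible_exists_block:
  assumes "expressible \<beta> (L(z := K)) (insert z B) V \<Phi>"
    and "z \<notin> B" "\<beta> ` V \<subseteq> B" "finite B" "K \<in> kinds"
  shows "expressible \<beta> L B V (\<lambda>t ve qe. \<exists>v. reached t v \<and> t v = Some K \<and> v \<notin> ve ` B \<and>
    \<Phi> t (ve(z := v)) qe)"
proof -
  obtain col :: "nat \<Rightarrow> (nat \<Rightarrow> nat list) \<Rightarrow> nat" and \<theta>
    where fin: "\<And>b. finite (range (col b))" and dep: "\<And>b. depends_on_block \<beta> V b (col b)"
      and sig: "\<And>c. fo_sig Sig n (\<theta> c)" and fv: "\<And>c. fv (\<theta> c) \<subseteq> insert z B"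
      and \<Phi>: "\<And>t ve qe. wf_tree Sig ar n t \<Longrightarrow> consistent t \<beta> (L(z := K)) (insert z B) V ve qe \<Longrightarrow>
        \<Phi> t ve qe \<longleftrightarrow> holds t (\<theta> (\<lambda>b. col b qe)) ve"
    using assms(1) by (rule expressibleE) (rule that)
  define k where "k = col z (\<lambda>_. [])"
  have "col z qe = k" for qe
    unfolding k_def by (rule depends_on_blockD[OF dep]) (use assms(2,3) in auto)
  then have col_z: "(\<lambda>b. col b qe)(z := k) = (\<lambda>b. col b qe)" for qe by auto
  show ?thesis
  proof (rule expressibleI[where col = col and \<theta> = "\<lambda>c. new_block_fo K z B (\<theta> (c(z := k)))"])
    fix t ve qe assume wt: "wf_tree Sig ar n t" and cons: "consistent t \<beta> L B V ve qe"
    show "(\<exists>v. reached t v \<and> t v = Some K \<and> v \<notin> ve ` B \<and> \<Phi> t (ve(z := v)) qe) \<longleftrightarrow>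
      holds t (new_block_fo K z B (\<theta> ((\<lambda>b. col b qe)(z := k)))) ve"
      using \<Phi>[OF wt consistent_block_update[OF cons assms(2,3)]] holds_new_block_fo[OF wt assms(4,2)] col_z
      by auto
  qed (use fin dep sig fv assms(4,5) fv_new_block_fo fo_sig_new_block_fo in auto)
qed

lemma ex_valid_iff:
  assumes wt: "wf_tree Sig ar n t" and cons: "consistent t \<beta> L B V ve qe"
  shows "(\<exists>v q. valid t v q \<and> P v q) \<longleftrightarrow> (\<exists>b\<in>B. \<exists>q\<in>inner (L b). P (ve b) q) \<or>
    (\<exists>K\<in>kinds. \<exists>v. reached t v \<and> t v = Some K \<and> v \<notin> ve ` B \<and> (\<exists>q\<in>inner K. P v q))"
    (is "_ \<longleftrightarrow> ?old \<or> ?new")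
proof
  have valid_block: "valid t (ve b) q \<longleftrightarrow> q \<in> inner (L b)" if "b \<in> B" for b q
    using cons that by (auto simp: consistent_def valid_def)
  have valid_kind: "valid t v q \<longleftrightarrow> (\<exists>K\<in>kinds. reached t v \<and> t v = Some K \<and> q \<in> inner K)" for v q
    using wf_tree_kind[OF wt] by (auto simp: valid_def kinds_def)
  {
    assume "\<exists>v q. valid t v q \<and> P v q"
    then obtain v q where vq: "valid t v q" "P v q" by blast
    show "?old \<or> ?new"
    proof (cases "v \<in> ve ` B")
      case True
      then obtain b where "b \<in> B" "v = ve b" by blast
      then show ?thesis using vq valid_block by blast
    next
      case False
      then show ?thesis using vq valid_kind by blast
    qed
  next
    assume "?old \<or> ?new"
    then show "\<exists>v q. valid t v q \<and> P v q" using valid_block valid_kind by blast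
  }
qed

lemma holds_flat_FEx:
  assumes wt: "wf_tree Sig ar n t" and cons: "consistent t \<beta> L B V ve qe"
    and "fv \<psi> - {x} \<subseteq> V" "\<beta> ` V \<subseteq> B" "z \<notin> B"
  shows "holds_flat (FEx x \<psi>) \<beta> t ve qe \<longleftrightarrow>
    (\<exists>b\<in>B. \<exists>q\<in>inner (L b). holds_flat \<psi> (\<beta>(x := b)) t ve (qe(x := q))) \<or>
    (\<exists>K\<in>kinds. \<exists>v. reached t v \<and> t v = Some K \<and> v \<notin> ve ` B \<and>
       (\<exists>q\<in>inner K. holds_flat \<psi> (\<beta>(x := z)) t (ve(z := v)) (qe(x := q))))"
proof -
  define E where "E i = enc t (ve (\<beta> i)) (qe i)" for i
  define P where "P v q \<longleftrightarrow> holds (flat (blocks t)) \<psi> (E(x := enc t v q))" for v q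
  have "holds_flat (FEx x \<psi>) \<beta> t ve qe \<longleftrightarrow> (\<exists>v q. valid t v q \<and> P v q)"
    unfolding holds_flat_def E_def P_def using flat_blocks_dom[OF wt] by auto
  moreover have "P (ve b) q \<longleftrightarrow> holds_flat \<psi> (\<beta>(x := b)) t ve (qe(x := q))" for b q
    unfolding holds_flat_def P_def E_def by (rule arg_cong[where f = "holds _ \<psi>"]) auto
  moreover have "P v q \<longleftrightarrow> holds_flat \<psi> (\<beta>(x := z)) t (ve(z := v)) (qe(x := q))" for v q
    unfolding holds_flat_def P_def E_def by (rule holds_cong) (use assms(3-5) in auto)
  ultimately show ?thesis using ex_valid_iff[OF wt cons, of P] by simp
qed

lemma holds_flat_FNeg: "holds_flat (FNeg \<psi>) \<beta> = (\<lambda>t ve qe. \<not> holds_flat \<psi> \<beta> t ve qe)"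
  and holds_flat_FConj:
    "holds_flat (FConj \<psi> \<psi>') \<beta> = (\<lambda>t ve qe. holds_flat \<psi> \<beta> t ve qe \<and> holds_flat \<psi>' \<beta> t ve qe)"
  by (simp_all add: fun_eq_iff holds_flat_def)

lemma expressible_holds_flat:
  "finite B \<Longrightarrow> fv \<psi> \<subseteq> V \<Longrightarrow> \<beta> ` V \<subseteq> B \<Longrightarrow> expressible \<beta> L B V (holds_flat \<psi> \<beta>)"
proof (induction \<psi> arbitrary: \<beta> L B V)
  case (FNeg \<psi>)
  then show ?case by (simp add: holds_flat_FNeg expressible_neg)
next
  case (FConj \<psi> \<psi>')
  then show ?case by (simp add: holds_flat_FConj expressible_conj)
next
  case (FEx x \<psi>)
  obtain z where z: "z \<notin> B" using ex_new_if_finite[OF infinite_UNIV_nat \<open>finite B\<close>] by blast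
  have old: "expressible \<beta> L B V (\<lambda>t ve qe. \<exists>q\<in>inner (L b). holds_flat \<psi> (\<beta>(x := b)) t ve (qe(x := q)))"
    if "b \<in> B" for b
    by (rule expressible_exists_inner[OF FEx.IH that]) (use FEx.prems that in auto)
  have new: "expressible \<beta> L B V (\<lambda>t ve qe. \<exists>v. reached t v \<and> t v = Some K \<and> v \<notin> ve ` B \<and>
      (\<exists>q\<in>inner K. holds_flat \<psi> (\<beta>(x := z)) t (ve(z := v)) (qe(x := q))))"
    if "K \<in> kinds" for K
  proof -
    have "expressible \<beta> (L(z := K)) (insert z B) V
        (\<lambda>t ve qe. \<exists>q\<in>inner ((L(z := K)) z). holds_flat \<psi> (\<beta>(x := z)) t ve (qe(x := q)))"
      by (rule expressible_exists_inner[OF FEx.IH]) (use FEx.prems in auto)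
    then show ?thesis using expressible_exists_block[OF _ z FEx.prems(3,1) that] by simp
  qed
  have "expressible \<beta> L B V (\<lambda>t ve qe.
    (\<exists>b\<in>B. \<exists>q\<in>inner (L b). holds_flat \<psi> (\<beta>(x := b)) t ve (qe(x := q))) \<or>
    (\<exists>K\<in>kinds. \<exists>v. reached t v \<and> t v = Some K \<and> v \<notin> ve ` B \<and>
       (\<exists>q\<in>inner K. holds_flat \<psi> (\<beta>(x := z)) t (ve(z := v)) (qe(x := q)))))"
    using expressible_disj[OF expressible_Bex[OF FEx.prems(1) old] expressible_Bex[OF finite_kinds new]] .
  then show ?case
    by (rule expressible_cong) (use holds_flat_FEx z FEx.prems(2,3) in simp)
qed (auto intro: expressible_FLe expressible_FSucc expressible_FLab expressible_FVar expressible_FRoot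
  expressible_FEq)

lemma sentence_translation:
  assumes "fv \<psi> = {}"
  obtains \<theta> where "fv \<theta> = {}" "fo_sig Sig n \<theta>"
    "\<And>t. wf_tree Sig ar n t \<Longrightarrow> models (flat (blocks t)) \<psi> \<longleftrightarrow> models t \<theta>"
proof -
  have "expressible (\<lambda>_. 0) (\<lambda>_. Inr 0) {} {} (holds_flat \<psi> (\<lambda>_. 0))"
    by (rule expressible_holds_flat) (use assms in auto)
  then obtain col :: "nat \<Rightarrow> (nat \<Rightarrow> nat list) \<Rightarrow> nat" and \<theta>
    where "\<And>c. fo_sig Sig n (\<theta> c)" "\<And>c. fv (\<theta> c) \<subseteq> {}"
      and \<psi>: "\<And>t ve qe. wf_tree Sig ar n t \<Longrightarrow> consistent t (\<lambda>_. 0) (\<lambda>_. Inr 0) {} {} ve qe \<Longrightarrow>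
        holds_flat \<psi> (\<lambda>_. 0) t ve qe \<longleftrightarrow> holds t (\<theta> (\<lambda>b. col b qe)) ve"
    by (rule expressibleE) (rule that)
  moreover have "models (flat (blocks t)) \<psi> \<longleftrightarrow> models t (\<theta> (\<lambda>b. col b (\<lambda>_. [])))"
    if "wf_tree Sig ar n t" for t
    using \<psi>[OF that, of "\<lambda>_. []" "\<lambda>_. []"] by (simp add: models_def holds_flat_def enc_def consistent_def)
  ultimately show thesis using that by blast
qed

end

section \<open>Morphisms of T-algebras\<close>

definition letter_tree :: "('a \<Rightarrow> nat) \<Rightarrow> 'a \<Rightarrow> 'a rtree" where
  "letter_tree ar a p = (case p of [] \<Rightarrow> Some (Inl a) | [i] \<Rightarrow> if i < ar a then Some (Inr i) else None
     | _ \<Rightarrow> None)"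

lemma wf_letter_tree: "a \<in> A \<Longrightarrow> wf_tree A ar (ar a) (letter_tree ar a)"
  unfolding wf_tree_def letter_tree_def by (auto split: list.splits if_splits)

lemma letter_tree_eq_Inl: "letter_tree ar a q = Some (Inl b) \<longleftrightarrow> q = [] \<and> b = a"
  by (cases q; cases "tl q") (auto simp: letter_tree_def)

lemma letter_tree_eq_Inr: "letter_tree ar a q = Some (Inr c) \<longleftrightarrow> q = [c] \<and> c < ar a"
  by (cases q; cases "tl q") (auto simp: letter_tree_def)

lemma has_var_letter_tree: "has_var (letter_tree ar a) c \<longleftrightarrow> c < ar a"
  by (simp add: has_var_def letter_tree_eq_Inr)

lemma var_pos_letter_tree: "c < ar a \<Longrightarrow> var_pos (letter_tree ar a) c = [c]"
  by (rule var_pos_eq[OF wf_letter_tree[of a UNIV]]) (simp_all add: letter_tree_def)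

context
  fixes A :: "'a set" and ar :: "'a \<Rightarrow> nat"
begin

interpretation letters: block_subst A ar A ar "letter_tree ar"
  by unfold_locales (rule wf_letter_tree)

lemma letters_inner: "letters.inner K = {[]}"
  by (cases K) (simp_all add: letters.inner_def letter_tree_eq_Inl)

context
  fixes t :: "'a rtree" and n :: nat
  assumes wt: "wf_tree A ar n t"
begin

lemma letters_reached: "t v \<noteq> None \<Longrightarrow> letters.reached t v"
proof -
  assume tv: "t v \<noteq> None"
  have "c < ar a" if "t y = Some (Inl a)" "prefix (y @ [c]) v" for y a c
    using that wf_tree_Inl[OF wt] wf_tree_prefix[OF wt tv] by blast
  then show ?thesis using letters.reached_iff[OF wt] tv by (simp add: has_var_letter_tree)
qed

lemma letters_block_pos: "t v \<noteq> None \<Longrightarrow> letters.block_pos t v = v"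
proof (induction v rule: rev_induct)
  case (snoc c v)
  then obtain a where "t v = Some (Inl a)" "c < ar a" using wf_tree_child[OF wt] by blast
  then show ?case using snoc.IH by (simp add: letters.block_pos_snoc_Inl var_pos_letter_tree)
qed simp

lemma letters_valid: "letters.valid t v q \<longleftrightarrow> t v \<noteq> None \<and> q = []"
  using letters_reached by (auto simp: letters.valid_def letters_inner letters.reached_def)

lemma flat_letters_blocks: "flat (letters.blocks t) = t"
proof
  fix p
  show "flat (letters.blocks t) p = t p"
  proof (cases "t p")
    case None
    then have "\<not> (\<exists>v q. letters.valid t v q \<and> p = letters.enc t v q)"
      by (auto simp: letters_valid letters.enc_def letters_block_pos)
    then show ?thesis using letters.flat_blocks_dom[OF wt, of p] None by auto
  next
    case (Some K)
    then have "flat (letters.blocks t) (letters.enc t p []) = letters.kind_label K []"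
      by (intro letters.flat_enc[OF wt]) (simp_all add: letters_valid)
    then show ?thesis
      using Some by (cases K) (simp_all add: letters.enc_def letters_block_pos letters.kind_label_def letter_tree_def)
  qed
qed

end

end

lemma talg_morphism_wf:
  "talg_morphism A arA B arB phi \<Longrightarrow> wf_tree A arA n t \<Longrightarrow> wf_tree B arB n (phi n t)"
  unfolding talg_morphism_def by blast

lemma talg_morphism_flat:
  "talg_morphism A arA B arB phi \<Longrightarrow> wf_tree (talph A arA) fst n s \<Longrightarrow> phi n (flat s) = flat (tmap phi s)"
  unfolding talg_morphism_def by blast

lemma talg_morphism_flat_blocks:
  assumes "talg_morphism A arA B arB phi" and wt: "wf_tree A arA n t"
  shows "phi n t = flat (block_subst.blocks arA (\<lambda>a. phi (arA a) (letter_tree arA a)) t)"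
proof -
  interpret letters: block_subst A arA A arA "letter_tree arA"
    by unfold_locales (rule wf_letter_tree)
  interpret image: block_subst A arA B arB "\<lambda>a. phi (arA a) (letter_tree arA a)"
    by unfold_locales (rule talg_morphism_wf[OF assms(1) wf_letter_tree])
  have "phi n t = phi n (flat (letters.blocks t))" using flat_letters_blocks[OF wt] by simp
  also have "\<dots> = flat (tmap phi (letters.blocks t))"
    by (rule talg_morphism_flat[OF assms(1) letters.wf_blocks[OF wt]])
  also have "tmap phi (letters.blocks t) = image.blocks t"
    by (auto simp: fun_eq_iff tmap_def letters.blocks_def image.blocks_def split: option.splits sum.splits)
  finally show ?thesis .
qed

theorem proposition10p6:
  fixes Sigma :: "'a set" and arS :: "'a \<Rightarrow> nat"
    and Gamma :: "'b set" and arG :: "'b \<Rightarrow> nat"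
    and phi :: "nat \<Rightarrow> 'a rtree \<Rightarrow> 'b rtree"
    and n :: nat and K :: "'b rtree set"
  assumes "finite Sigma" and "finite Gamma"
    and "talg_morphism Sigma arS Gamma arG phi"
    and "fo_definable Gamma arG n K"
  shows "fo_definable Sigma arS n {t \<in> trees Sigma arS n. phi n t \<in> K}"
proof -
  obtain f where f: "fv f = {}" "K = {t \<in> trees Gamma arG n. models t f}"
    using assms(4) unfolding fo_definable_def by blast
  define h where "h = (\<lambda>a. phi (arS a) (letter_tree arS a))"
  interpret fo_translation Sigma arS Gamma arG h n
    by unfold_locales (simp_all add: h_def talg_morphism_wf[OF assms(3)] wf_letter_tree assms(1))
  obtain \<theta> where \<theta>: "fv \<theta> = {}" "fo_sig Sigma n \<theta>"
    "\<And>t. wf_tree Sigma arS n t \<Longrightarrow> models (flat (blocks t)) f \<longleftrightarrow> models t \<theta>"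
    using sentence_translation[OF f(1)] by blast
  have "phi n t \<in> K \<longleftrightarrow> models t \<theta>" if "wf_tree Sigma arS n t" for t
    using f(2) talg_morphism_wf[OF assms(3) that] \<theta>(3)[OF that] talg_morphism_flat_blocks[OF assms(3) that]
    by (simp add: trees_def h_def)
  then have "{t \<in> trees Sigma arS n. phi n t \<in> K} = {t \<in> trees Sigma arS n. models t \<theta>}"
    by (auto simp: trees_def)
  then show ?thesis unfolding fo_definable_def using \<theta>(1,2) by blast
qed

end
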